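(* In the setting below, the quasi-cyclic code $C$ is symplectic LCD if and only if all of the following hold: (I) $g(x)$ is self-reciprocal; (II) $l(x)$ is self-reciprocal; (III) $r_{11}(x)=1$; (IV) $\gcd\big(r_{22}(x),\ g_{11}(x)\bar g_{12}(x)-g_{12}(x)\bar g_{11}(x)\big)=1$.
   Context: Let $q$ be a prime power, $F=\mathbb{F}_q$, $m\ge1$ with $\gcd(q,m)=1$, and $R=F[x]/\langle x^m-1\rangle$; elements of $R$ are represented by polynomials of degree $<m$ and identified with their coefficient vectors in $F^m$. A quasi-cyclic code of length $2m$ and index $2$ is an $R$-submodule $C\subseteq R^2$. For $a,b\in R$ let $\langle a,b\rangle_e$ be the standard dot product of their coefficient vectors. The symplectic form on $R^2$ is $\langle (a_1,a_2),(b_1,b_2)\rangle_s=\langle a_1,b_2\rangle_e-\langle a_2,b_1\rangle_e$; $C^{\perp_s}$ is the dual with respect to it, and $C$ is symplectic LCD if $C\cap C^{\perp_s}=\{0\}$. For a nonzero polynomial $f$ of degree $k$, $f^*(x)=x^kf(x^{-1})$; $f$ is self-reciprocal if $f^*=\alpha f$ for some $\alpha\in F$. For a polynomial $f$ of degree at most $m$, $\bar f(x)=x^m f(x^{-1})$. Suppose $C$ is generated as an $R$-module by $(g_{11}(x),g_{12}(x))$ and $(0,g_{22}(x))$, where $g_{11},g_{12},g_{22}\in F[x]$ satisfy: $g_{11}\mid x^m-1$, $g_{22}\mid x^m-1$, $\deg g_{12}<\deg g_{22}$, and $g_{11}g_{22}\mid (x^m-1)g_{12}$. Define $g=\gcd(g_{11},g_{22})$,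 $l=(x^m-1)/\mathrm{lcm}(g_{11},g_{22})$, $g_{11}=g\,g_{11}'$, $g_{22}=g\,g_{22}'$, $r_{11}=\gcd(g_{11}',g_{11}'^* )$, $r_{22}=\gcd(g_{22}',g_{22}'^* )$ (gcds taken monic). *)

theory Defs
  imports "HOL-Computational_Algebra.Computational_Algebra"
begin

definition xm1 :: "nat \<Rightarrow> 'a::field poly" where
  "xm1 m = monom 1 m - 1"

text \<open>Elements of R = F[x]/(x^m-1), represented by polynomials of degree < m.\<close>
definition Rm :: "nat \<Rightarrow> 'a::field poly set" where
  "Rm m = {p. degree p < m}"

definition euc :: "nat \<Rightarrow> 'a::field poly \<Rightarrow> 'a poly \<Rightarrow> 'a" where
  "euc m a b = (\<Sum>i<m. coeff a i * coeff b i)"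

definition symp :: "nat \<Rightarrow> 'a::field poly \<times> 'a poly \<Rightarrow> 'a poly \<times> 'a poly \<Rightarrow> 'a" where
  "symp m u v = euc m (fst u) (snd v) - euc m (snd u) (fst v)"

definition qc_code :: "nat \<Rightarrow> 'a::field poly \<Rightarrow> 'a poly \<Rightarrow> 'a poly \<Rightarrow> ('a poly \<times> 'a poly) set" where
  "qc_code m g11 g12 g22 =
     {((a * g11) mod xm1 m, (a * g12 + b * g22) mod xm1 m) | a b. a \<in> Rm m \<and> b \<in> Rm m}"

definition symp_dual :: "nat \<Rightarrow> ('a::field poly \<times> 'a poly) set \<Rightarrow> ('a poly \<times> 'a poly) set" where
  "symp_dual m C = {v. fst v \<in> Rm m \<and> snd v \<in> Rm m \<and> (\<forall>c\<in>C. symp m c v = 0)}"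

definition symp_LCD :: "nat \<Rightarrow> ('a::field poly \<times> 'a poly) set \<Rightarrow> bool" where
  "symp_LCD m C \<longleftrightarrow> C \<inter> symp_dual m C = {(0, 0)}"

text \<open>f^* = x^{deg f} f(1/x) is the library's reflect_poly.\<close>
definition self_reciprocal :: "'a::field poly \<Rightarrow> bool" where
  "self_reciprocal f \<longleftrightarrow> f \<noteq> 0 \<and> (\<exists>\<alpha>. reflect_poly f = smult \<alpha> f)"

text \<open>bar f = x^m f(1/x) for deg f \<le> m.\<close>
definition bar :: "nat \<Rightarrow> 'a::field poly \<Rightarrow> 'a poly" where
  "bar m f = (\<Sum>i\<le>m. monom (coeff f i) (m - i))"

end

theory Submission
  imports Defs
begin

text \<open>
  Write a codeword as \<open>(a g\<^sub>1\<^sub>1, a g\<^sub>1\<^sub>2 + b g\<^sub>2\<^sub>2)\<close>. The Euclidean product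
  \<open>\<langle>u, w\<rangle>\<^sub>e\<close> is the constant term of \<open>u(x) w(x\<^sup>-\<^sup>1)\<close> modulo \<open>x\<^sup>m - 1\<close>, so a codeword
  lies in the symplectic dual iff two polynomials built from \<open>a(x\<^sup>-\<^sup>1)\<close> and \<open>b(x\<^sup>-\<^sup>1)\<close> are
  divisible by \<open>x\<^sup>m - 1\<close>. Since the characteristic does not divide \<open>m\<close>, \<open>x\<^sup>m - 1\<close> is
  squarefree, so every divisibility by (a divisor of) \<open>x\<^sup>m - 1\<close> can be tested one
  irreducible factor \<open>p\<close> at a time, and the substitution \<open>x \<mapsto> x\<^sup>-\<^sup>1\<close> trades \<open>p\<close> for its
  reciprocal \<open>p\<^sup>*\<close>. The hull is trivial iff a local condition holds at every \<open>p\<close>; the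
  conditions (I)--(IV) are exactly these local conditions, and when one of them fails at \<open>p\<close>
  a nonzero hull codeword is built from the cofactor \<open>(x\<^sup>m - 1)/p\<close>.
\<close>

subsection \<open>Arithmetic modulo \<open>x\<^sup>m - 1\<close>\<close>

lemma degree_xm1: "m \<ge> 1 \<Longrightarrow> degree (xm1 m :: 'a::field poly) = m"
proof -
  assume m: "m \<ge> 1"
  have "coeff (xm1 m :: 'a poly) m = 1" using m by (simp add: xm1_def coeff_monom)
  then have "m \<le> degree (xm1 m :: 'a poly)" by (simp add: le_degree)
  moreover have "degree (xm1 m :: 'a poly) \<le> m" unfolding xm1_def
    by (metis degree_diff_le degree_monom_le degree_1 le0)
  ultimately show ?thesis by simp
qed

lemma xm1_nonzero: "m \<ge> 1 \<Longrightarrow> xm1 m \<noteq> (0 :: 'a::field poly)"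
  using degree_xm1[of m, where 'a='a] by auto

lemma coeff_0_xm1: "m \<ge> 1 \<Longrightarrow> coeff (xm1 m :: 'a::field poly) 0 = -1"
  by (simp add: xm1_def coeff_monom)

lemma xm1_dvd_monom_diff:
  assumes "a mod m = b mod m"
  shows "xm1 m dvd (monom c a - monom c b :: 'a::field poly)"
proof -
  have shift: "xm1 m dvd (monom c (b + m * k) - monom c b :: 'a poly)" for b k
  proof -
    have "monom c (b + m * k) - monom c b = monom c b * ((monom 1 m) ^ k - (1 :: 'a poly))"
      by (simp add: monom_power mult_monom right_diff_distrib mult.commute)
    moreover have "xm1 m dvd (monom 1 m) ^ k - (1 :: 'a poly)"
      unfolding xm1_def by (metis dvdI power_diff_1_eq)
    ultimately show ?thesis by simp
  qed
  show ?thesis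
  proof (cases "a \<le> b")
    case True
    then obtain k where "b = a + m * k"
      using assms by (metis le_add_diff_inverse mod_eq_dvd_iff_nat dvdE)
    then show ?thesis using shift[of a k] by (metis dvd_minus_iff minus_diff_eq)
  next
    case False
    then obtain k where "a = b + m * k"
      using assms by (metis le_add_diff_inverse mod_eq_dvd_iff_nat dvdE nat_le_linear)
    then show ?thesis using shift[of b k] by simp
  qed
qed

lemma degree_mod_xm1_less:
  assumes "m \<ge> 1"
  shows "degree (u mod xm1 m :: 'a::field poly) < m"
proof (cases "u mod xm1 m = 0")
  case False
  then show ?thesis
    using degree_mod_less[OF xm1_nonzero[OF assms], of u] degree_xm1[OF assms, where 'a='a] by simp
qed (use assms in simp)

lemma monom_mod_xm1:
  assumes "m \<ge> 1"
  shows "monom c e mod xm1 m = (monom c (e mod m) :: 'a::field poly)"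
proof -
  have "monom c e mod xm1 m = monom c (e mod m) mod (xm1 m :: 'a poly)"
    unfolding mod_eq_dvd_iff by (rule xm1_dvd_monom_diff) simp
  also have "\<dots> = monom c (e mod m)"
  proof (rule mod_poly_less)
    have "degree (monom c (e mod m) :: 'a poly) \<le> e mod m" by (rule degree_monom_le)
    also have "e mod m < m" using assms by simp
    finally show "degree (monom c (e mod m) :: 'a poly) < degree (xm1 m :: 'a poly)"
      using degree_xm1[OF assms, where 'a='a] by simp
  qed
  finally show ?thesis .
qed

lemma dvd_iff_of_dvd_diff:
  fixes d n a b :: "'a::comm_ring_1"
  assumes "d dvd n" and "n dvd a - b"
  shows "d dvd a \<longleftrightarrow> d dvd b"
proof -
  have "d dvd a - b" using assms by (rule dvd_trans)
  then show ?thesis by (metis diff_add_cancel dvd_add_right_iff)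
qed

lemma dvd_pcompose_diff: "(u - v) dvd (pcompose h u - pcompose h (v :: 'a::comm_ring_1 poly))"
proof (induction h)
  case (pCons a h)
  have "pcompose (pCons a h) u - pcompose (pCons a h) v
      = (u - v) * pcompose h u + v * (pcompose h u - pcompose h v)"
    by (simp add: pcompose_pCons algebra_simps)
  then show ?case using pCons by (metis dvd_add dvd_mult dvd_mult2 dvd_refl)
qed simp

lemma pcompose_monom_left: "pcompose (monom c i) q = smult c (q ^ i)"
  by (induction i) (simp_all add: monom_Suc pcompose_pCons monom_0)

subsection \<open>The substitution \<open>x \<mapsto> x\<^sup>-\<^sup>1\<close>\<close>

text \<open>Modulo \<open>x\<^sup>m - 1\<close> the monomial \<open>x\<^sup>m\<^sup>-\<^sup>1\<close> is the inverse of \<open>x\<close>, so this is the ring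
  involution \<open>h(x) \<mapsto> h(x\<^sup>-\<^sup>1)\<close> of \<open>R\<close>, realised by a genuine ring homomorphism of \<open>F[x]\<close>.\<close>

definition inv_subst :: "nat \<Rightarrow> 'a::field poly \<Rightarrow> 'a poly" where
  "inv_subst m h = pcompose h (monom 1 (m - 1))"

lemma inv_subst_0 [simp]: "inv_subst m 0 = 0"
  by (simp add: inv_subst_def)

lemma inv_subst_add: "inv_subst m (a + b) = inv_subst m a + inv_subst m b"
  by (simp add: inv_subst_def pcompose_add)

lemma inv_subst_diff: "inv_subst m (a - b) = inv_subst m a - inv_subst m b"
  by (simp add: inv_subst_def pcompose_diff)

lemma inv_subst_minus: "inv_subst m (- a) = - inv_subst m a"
  by (simp add: inv_subst_def pcompose_uminus)

lemma inv_subst_mult: "inv_subst m (a * b) = inv_subst m a * inv_subst m b"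
  by (simp add: inv_subst_def pcompose_mult)

lemmas inv_subst_hom = inv_subst_add inv_subst_diff inv_subst_minus inv_subst_mult

lemma inv_subst_cong:
  assumes "xm1 m dvd u - v"
  shows "xm1 m dvd inv_subst m u - inv_subst m (v :: 'a::field poly)"
proof -
  obtain k where k: "u - v = xm1 m * k" using assms by (elim dvdE)
  have "inv_subst m u - inv_subst m v = inv_subst m (xm1 m) * inv_subst m k"
    by (metis k inv_subst_diff inv_subst_mult)
  moreover have "inv_subst m (xm1 m) = monom 1 ((m - 1) * m) - monom 1 0"
    by (simp add: inv_subst_def xm1_def pcompose_diff pcompose_monom_left monom_power
        pcompose_1 monom_0 one_pCons)
  moreover have "xm1 m dvd monom 1 ((m - 1) * m) - (monom 1 0 :: 'a poly)"
    by (rule xm1_dvd_monom_diff) simp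
  ultimately show ?thesis by (metis dvd_mult2)
qed

lemma inv_subst_inv_subst:
  assumes m: "m \<ge> 1"
  shows "xm1 m dvd inv_subst m (inv_subst m h) - (h :: 'a::field poly)"
proof -
  have "inv_subst m (inv_subst m h) = pcompose h (monom 1 ((m - 1) * (m - 1)))"
    by (simp add: inv_subst_def pcompose_assoc[symmetric] pcompose_monom_left monom_power)
  moreover have "((m - 1) * (m - 1)) mod m = 1 mod m"
  proof (cases "m = 1")
    case False
    then obtain k where "m = Suc (Suc k)" using m by (metis Suc_le_D not0_implies_Suc One_nat_def)
    then have "(m - 1) * (m - 1) = 1 + k * m" by (simp add: algebra_simps)
    then show ?thesis by (simp only: mod_mult_self1)
  qed simp
  then have "xm1 m dvd monom 1 ((m - 1) * (m - 1)) - (monom 1 1 :: 'a poly)"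
    by (rule xm1_dvd_monom_diff)
  then have "xm1 m dvd pcompose h (monom 1 ((m - 1) * (m - 1))) - pcompose h (monom 1 1)"
    using dvd_pcompose_diff dvd_trans by metis
  moreover have "monom 1 1 = [:0, 1 :: 'a:]" by (simp add: monom_Suc)
  ultimately show ?thesis by simp
qed

lemma sum_monom_rev_coeff:
  "coeff (\<Sum>i\<le>N. monom (coeff h i) (N - i)) n = (if n \<le> N then coeff h (N - n) else 0)"
proof -
  have "coeff (\<Sum>i\<le>N. monom (coeff h i) (N - i)) n = (\<Sum>i\<le>N. if N - i = n then coeff h i else 0)"
    by (simp add: coeff_sum coeff_monom)
  also have "\<dots> = (\<Sum>i\<in>{..N} \<inter> {i. i = N - n \<and> n \<le> N}. coeff h i)"
    by (rule sum.inter_filter[symmetric, THEN trans]) (auto intro!: sum.cong)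
  also have "\<dots> = (if n \<le> N then coeff h (N - n) else 0)"
  proof (cases "n \<le> N")
    case True
    then have "{..N} \<inter> {i. i = N - n \<and> n \<le> N} = {N - n}" by auto
    then show ?thesis using True by simp
  qed simp
  finally show ?thesis .
qed

text \<open>Both \<open>f\<^sup>*\<close> and \<open>bar f\<close> are sums of this shape, with \<open>N = deg f\<close> and \<open>N = m\<close>.\<close>

lemma monom_mult_inv_subst_cong:
  assumes "degree h \<le> N" and "m \<ge> 1"
  shows "xm1 m dvd monom 1 N * inv_subst m h - (\<Sum>i\<le>N. monom (coeff h i) (N - i) :: 'a::field poly)"
proof -
  have "inv_subst m h = (\<Sum>i\<le>N. monom (coeff h i) (i * (m - 1)))"
    using assms(1) by (subst poly_as_sum_of_monoms'[symmetric])
      (simp_all add: inv_subst_def pcompose_sum pcompose_monom_left monom_power smult_monom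
        mult.commute)
  then have "monom 1 N * inv_subst m h - (\<Sum>i\<le>N. monom (coeff h i) (N - i))
      = (\<Sum>i\<le>N. monom (coeff h i) (N + i * (m - 1)) - monom (coeff h i) (N - i))"
    by (simp add: sum_distrib_left mult_monom sum_subtractf)
  moreover have "xm1 m dvd monom (coeff h i) (N + i * (m - 1)) - (monom (coeff h i) (N - i) :: 'a poly)"
    if "i \<in> {..N}" for i
  proof (rule xm1_dvd_monom_diff)
    from that have "N + i * (m - 1) = (N - i) + i * m" using assms(2)
      by (simp add: algebra_simps diff_mult_distrib2)
    then show "(N + i * (m - 1)) mod m = (N - i) mod m" by simp
  qed
  ultimately show ?thesis by (metis (no_types, lifting) dvd_sum)
qed

lemma reflect_poly_cong_inv_subst:
  "m \<ge> 1 \<Longrightarrow> xm1 m dvd monom 1 (degree h) * inv_subst m h - reflect_poly (h :: 'a::field poly)"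
proof -
  assume m: "m \<ge> 1"
  have "reflect_poly h = (\<Sum>i\<le>degree h. monom (coeff h i) (degree h - i))"
    by (rule poly_eqI) (simp add: sum_monom_rev_coeff coeff_reflect_poly not_less)
  then show ?thesis using monom_mult_inv_subst_cong[OF order.refl m, of h] by simp
qed

lemma bar_cong_inv_subst:
  assumes m: "m \<ge> 1" and deg: "degree f \<le> m"
  shows "xm1 m dvd bar m f - inv_subst m (f :: 'a::field poly)"
proof -
  have "xm1 m dvd monom 1 m * inv_subst m f - bar m f"
    using monom_mult_inv_subst_cong[OF deg m] by (simp add: bar_def)
  moreover have "xm1 m dvd (monom 1 m - monom 1 0) * inv_subst m f"
    by (intro dvd_mult2 xm1_dvd_monom_diff) simp
  ultimately have "xm1 m dvd (monom 1 m - monom 1 0) * inv_subst m f - (monom 1 m * inv_subst m f - bar m f)"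
    by (rule dvd_diff[rotated])
  then show ?thesis by (simp add: algebra_simps monom_0 one_pCons)
qed

lemma bar_mod_cong_inv_subst:
  assumes m: "m \<ge> 1"
  shows "xm1 m dvd bar m (u mod xm1 m) - inv_subst m (u :: 'a::field poly)"
proof -
  have "xm1 m dvd bar m (u mod xm1 m) - inv_subst m (u mod xm1 m)"
    using bar_cong_inv_subst[OF m less_imp_le[OF degree_mod_xm1_less[OF m]]] .
  moreover have "xm1 m dvd inv_subst m (u mod xm1 m) - inv_subst m u"
    by (rule inv_subst_cong) (simp flip: mod_eq_dvd_iff)
  ultimately have "xm1 m dvd (bar m (u mod xm1 m) - inv_subst m (u mod xm1 m))
      + (inv_subst m (u mod xm1 m) - inv_subst m u)"
    by (rule dvd_add)
  then show ?thesis by simp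
qed

lemma reflect_poly_dvd:
  fixes a b :: "'a::{comm_semiring_1,semiring_no_zero_divisors} poly"
  shows "a dvd b \<Longrightarrow> reflect_poly a dvd reflect_poly b"
  by (auto elim!: dvdE simp: reflect_poly_mult)

lemma reflect_poly_xm1:
  assumes m: "m \<ge> 1"
  shows "reflect_poly (xm1 m) = - (xm1 m :: 'a::field poly)"
proof (rule poly_eqI)
  fix n
  show "coeff (reflect_poly (xm1 m)) n = coeff (- xm1 m :: 'a poly) n"
    using m unfolding coeff_reflect_poly degree_xm1[OF m] by (auto simp: xm1_def coeff_monom)
qed

lemma coeff_0_nonzero_if_dvd_xm1:
  assumes m: "m \<ge> 1" and "p dvd xm1 m"
  shows "coeff (p :: 'a::field poly) 0 \<noteq> 0"
proof
  assume p0: "coeff p 0 = 0"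
  obtain k where "xm1 m = p * k" using assms(2) by (elim dvdE)
  then have "coeff (xm1 m :: 'a poly) 0 = coeff p 0 * coeff k 0" by (simp add: coeff_mult_0)
  then show False using p0 coeff_0_xm1[OF m, where 'a='a] by simp
qed

lemma reflect_poly_dvd_xm1: "m \<ge> 1 \<Longrightarrow> p dvd xm1 m \<Longrightarrow> reflect_poly p dvd (xm1 m :: 'a::field poly)"
  using reflect_poly_dvd[of p "xm1 m"] reflect_poly_xm1[of m, where 'a='a] by simp

lemma dvd_reflect_poly_iff:
  assumes m: "m \<ge> 1" and p: "p dvd xm1 m" and h: "h dvd (xm1 m :: 'a::field poly)"
  shows "p dvd reflect_poly h \<longleftrightarrow> reflect_poly p dvd h"
proof
  assume "p dvd reflect_poly h"
  then show "reflect_poly p dvd h"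
    using reflect_poly_dvd[of p "reflect_poly h"] coeff_0_nonzero_if_dvd_xm1[OF m h] by simp
next
  assume "reflect_poly p dvd h"
  then show "p dvd reflect_poly h"
    using reflect_poly_dvd[of "reflect_poly p" h] coeff_0_nonzero_if_dvd_xm1[OF m p] by simp
qed

text \<open>Modulo \<open>x\<^sup>m - 1\<close>, \<open>h(x\<^sup>-\<^sup>1)\<close> and \<open>h\<^sup>*\<close> differ by a power of \<open>x\<close>, which is a unit.\<close>

lemma inv_subst_cong_reflect_poly:
  assumes m: "m \<ge> 1"
  shows "xm1 m dvd inv_subst m h - monom 1 ((m - 1) * degree h) * reflect_poly (h :: 'a::field poly)"
proof -
  let ?d = "degree h"
  have "inv_subst m h - monom 1 ((m - 1) * ?d) * reflect_poly h
      = monom 1 ((m - 1) * ?d) * (monom 1 ?d * inv_subst m h - reflect_poly h)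
        - (monom 1 (m * ?d) - monom 1 0) * inv_subst m h"
    using m by (simp add: algebra_simps mult_monom monom_0 one_pCons diff_mult_distrib
        add_mult_distrib mult.commute)
  moreover have "xm1 m dvd (monom 1 (m * ?d) - monom 1 0) * inv_subst m h"
    by (intro dvd_mult2 xm1_dvd_monom_diff) simp
  ultimately show ?thesis using reflect_poly_cong_inv_subst[OF m, of h] by (simp add: dvd_diff)
qed

lemma inv_subst_reflect_poly_cong:
  assumes m: "m \<ge> 1"
  shows "xm1 m dvd inv_subst m (reflect_poly h) - inv_subst m (monom 1 (degree h)) * (h :: 'a::field poly)"
proof -
  let ?u = "inv_subst m (monom 1 (degree h))"
  have "xm1 m dvd ?u * (inv_subst m (inv_subst m h) - h)"
    using inv_subst_inv_subst[OF m, of h] by simp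
  moreover have "xm1 m dvd ?u * inv_subst m (inv_subst m h) - inv_subst m (reflect_poly h)"
    using inv_subst_cong[OF reflect_poly_cong_inv_subst[OF m, of h]] by (simp add: inv_subst_mult)
  ultimately have "xm1 m dvd ?u * (inv_subst m (inv_subst m h) - h)
      - (?u * inv_subst m (inv_subst m h) - inv_subst m (reflect_poly h))"
    by (rule dvd_diff)
  then show ?thesis by (simp add: algebra_simps)
qed

lemma dvd_inv_subst_iff:
  assumes m: "m \<ge> 1" and f: "f dvd xm1 m"
  shows "f dvd inv_subst m h \<longleftrightarrow> reflect_poly f dvd (h :: 'a::field poly)"
proof
  assume "f dvd inv_subst m h"
  then obtain k where k: "inv_subst m h = f * k" by (elim dvdE)
  have rf: "reflect_poly f dvd xm1 m" by (rule reflect_poly_dvd_xm1[OF m f])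
  have "reflect_poly f dvd inv_subst m f"
    using dvd_iff_of_dvd_diff[OF rf inv_subst_cong_reflect_poly[OF m, of f]] by simp
  then have "reflect_poly f dvd inv_subst m (inv_subst m h)" by (simp add: k inv_subst_mult)
  then show "reflect_poly f dvd h" using dvd_iff_of_dvd_diff[OF rf inv_subst_inv_subst[OF m]] by simp
next
  assume "reflect_poly f dvd h"
  then obtain k where "h = reflect_poly f * k" by (elim dvdE)
  moreover have "f dvd inv_subst m (reflect_poly f)"
    using dvd_iff_of_dvd_diff[OF f inv_subst_reflect_poly_cong[OF m, of f]] by simp
  ultimately show "f dvd inv_subst m h" by (simp add: inv_subst_mult)
qed

lemma reflect_dvd_inv_subst_iff:
  assumes m: "m \<ge> 1" and p: "p dvd xm1 m"
  shows "reflect_poly p dvd inv_subst m u \<longleftrightarrow> p dvd (u :: 'a::field poly)"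
  using dvd_inv_subst_iff[OF m reflect_poly_dvd_xm1[OF m p], of u] coeff_0_nonzero_if_dvd_xm1[OF m p]
  by simp

subsection \<open>The Euclidean product as a constant term\<close>

definition coeff0_mod :: "nat \<Rightarrow> 'a::field poly \<Rightarrow> 'a" where
  "coeff0_mod m h = coeff (h mod xm1 m) 0"

lemma coeff0_mod_0 [simp]: "coeff0_mod m 0 = 0"
  by (simp add: coeff0_mod_def)

lemma coeff0_mod_add: "coeff0_mod m (a + b) = coeff0_mod m a + coeff0_mod m b"
  by (simp add: coeff0_mod_def poly_mod_add_left)

lemma coeff0_mod_diff: "coeff0_mod m (a - b) = coeff0_mod m a - coeff0_mod m b"
  by (simp add: coeff0_mod_def poly_mod_diff_left)

lemma coeff0_mod_sum: "coeff0_mod m (sum f A) = (\<Sum>i\<in>A. coeff0_mod m (f i))"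
  by (induction A rule: infinite_finite_induct) (simp_all add: coeff0_mod_add)

lemma coeff0_mod_cong: "xm1 m dvd a - b \<Longrightarrow> coeff0_mod m a = coeff0_mod m b"
  by (simp add: coeff0_mod_def flip: mod_eq_dvd_iff)

lemma coeff0_mod_eq_0: "xm1 m dvd a \<Longrightarrow> coeff0_mod m a = 0"
  by (simp add: coeff0_mod_def)

lemma coeff0_mod_monom:
  "m \<ge> 1 \<Longrightarrow> coeff0_mod m (monom c e :: 'a::field poly) = (if m dvd e then c else 0)"
  by (simp add: coeff0_mod_def monom_mod_xm1 coeff_monom dvd_eq_mod_eq_0)

lemma dvd_add_diff_imp_eq:
  assumes "i < m" "j < m" "(m::nat) dvd i + (m - j)"
  shows "i = j"
proof -
  obtain k where k: "i + (m - j) = m * k" using assms(3) by (elim dvdE)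
  consider "k = 0" | "k = 1" | "k \<ge> 2" by linarith
  then show ?thesis
  proof cases
    case 3
    then have "m * 2 \<le> m * k" by simp
    then show ?thesis using k assms by linarith
  qed (use k assms in auto)
qed

lemma euc_mod_xm1:
  fixes u w :: "'a::field poly"
  assumes m: "m \<ge> 1" and w: "degree w < m"
  shows "euc m (u mod xm1 m) w = coeff0_mod m (u * bar m w)"
proof -
  define a where "a = u mod xm1 m"
  have da: "degree a < m" using degree_mod_xm1_less[OF m] a_def by simp
  have am: "coeff a m = 0" and wm: "coeff w m = 0" using da w by (simp_all add: coeff_eq_0)
  have "coeff0_mod m (u * bar m w) = coeff0_mod m (a * bar m w)"
    by (rule coeff0_mod_cong) (simp add: a_def mod_mult_left_eq flip: mod_eq_dvd_iff)
  also have "a * bar m w = (\<Sum>j\<le>m. \<Sum>i\<le>m. monom (coeff a i * coeff w j) (i + (m - j)))"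
    by (subst poly_as_sum_of_monoms'[of a m, symmetric], use da in simp)
       (simp add: bar_def sum_distrib_left sum_distrib_right mult_monom)
  also have "coeff0_mod m \<dots> = (\<Sum>j\<le>m. \<Sum>i\<le>m. if m dvd i + (m - j) then coeff a i * coeff w j else 0)"
    by (simp add: coeff0_mod_sum coeff0_mod_monom[OF m])
  also have "\<dots> = (\<Sum>j\<le>m. \<Sum>i\<le>m. if j = i then coeff a i * coeff w j else 0)"
  proof (intro sum.cong refl)
    fix i j assume "i \<in> {..m}" "j \<in> {..m}"
    then show "(if m dvd i + (m - j) then coeff a i * coeff w j else 0) =
          (if j = i then coeff a i * coeff w j else 0)"
      using am wm dvd_add_diff_imp_eq[of i m j] by (cases "i = m \<or> j = m") auto
  qed
  also have "\<dots> = (\<Sum>i<m. coeff a i * coeff w i)"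
    using am by (simp add: sum.delta lessThan_Suc_atMost[symmetric])
  finally show ?thesis by (simp add: euc_def a_def)
qed

lemma xm1_dvd_if_coeff0_mod_mult_eq_0:
  fixes h :: "'a::field poly"
  assumes m: "m \<ge> 1" and all: "\<And>a. coeff0_mod m (a * h) = 0"
  shows "xm1 m dvd h"
proof -
  have "coeff (h mod xm1 m) j = 0" for j
  proof (cases "j < m")
    case True
    have "euc m (h mod xm1 m) (monom 1 j) = (\<Sum>i<m. if i = j then coeff (h mod xm1 m) i else 0)"
      unfolding euc_def by (rule sum.cong) (auto simp: coeff_monom)
    then have "coeff (h mod xm1 m) j = euc m (h mod xm1 m) (monom 1 j)"
      using True by (simp add: sum.delta)
    also have "\<dots> = coeff0_mod m (h * bar m (monom 1 j))"
      by (rule euc_mod_xm1[OF m]) (use True degree_monom_le le_less_trans in blast)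
    also have "\<dots> = 0" using all by (metis mult.commute)
    finally show ?thesis .
  next
    case False
    then show ?thesis using degree_mod_xm1_less[OF m, of h] by (simp add: coeff_eq_0)
  qed
  then show ?thesis by (simp add: poly_eq_iff mod_eq_0_iff_dvd flip: mod_eq_0_iff_dvd)
qed

subsection \<open>Codewords in the symplectic dual\<close>

lemma symp_codeword:
  assumes m: "m \<ge> 1" and v: "fst v \<in> Rm m" "snd v \<in> Rm m"
  shows "symp m ((a * g11) mod xm1 m, (a * g12 + b * g22) mod xm1 m) v
       = coeff0_mod m (a * (g11 * bar m (snd v) - g12 * bar m (fst v)) - b * (g22 * bar m (fst v)))"
proof -
  have "symp m ((a * g11) mod xm1 m, (a * g12 + b * g22) mod xm1 m) v =
     coeff0_mod m (a * g11 * bar m (snd v) - (a * g12 + b * g22) * bar m (fst v))"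
    using v by (simp add: symp_def euc_mod_xm1[OF m] Rm_def coeff0_mod_diff)
  also have "a * g11 * bar m (snd v) - (a * g12 + b * g22) * bar m (fst v)
     = a * (g11 * bar m (snd v) - g12 * bar m (fst v)) - b * (g22 * bar m (fst v))"
    by (simp add: algebra_simps)
  finally show ?thesis .
qed

lemma mod_xm1_in_Rm: "m \<ge> 1 \<Longrightarrow> a mod xm1 m \<in> Rm m"
  by (simp add: Rm_def degree_mod_xm1_less)

lemma codeword_in_qc_code:
  assumes m: "m \<ge> 1"
  shows "((a * g11) mod xm1 m, (a * g12 + b * g22) mod xm1 m) \<in> qc_code m g11 g12 g22"
  unfolding qc_code_def mem_Collect_eq
proof (intro exI conjI)
  have "((a mod xm1 m) * g12 + (b mod xm1 m) * g22) mod xm1 m = (a * g12 + b * g22) mod xm1 m"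
    by (rule mod_add_cong) (simp_all add: mod_mult_left_eq)
  then show "((a * g11) mod xm1 m, (a * g12 + b * g22) mod xm1 m) =
      (((a mod xm1 m) * g11) mod xm1 m, ((a mod xm1 m) * g12 + (b mod xm1 m) * g22) mod xm1 m)"
    by (simp add: mod_mult_left_eq)
qed (rule mod_xm1_in_Rm[OF m])+

lemma symp_orth_qc_code_iff:
  fixes g11 g12 g22 :: "'a::field poly"
  assumes m: "m \<ge> 1" and v: "fst v \<in> Rm m" "snd v \<in> Rm m"
  shows "(\<forall>c\<in>qc_code m g11 g12 g22. symp m c v = 0) \<longleftrightarrow>
     xm1 m dvd g22 * bar m (fst v) \<and> xm1 m dvd g11 * bar m (snd v) - g12 * bar m (fst v)"
    (is "?L \<longleftrightarrow> xm1 m dvd ?A \<and> xm1 m dvd ?B")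
proof
  assume L: ?L
  have orth: "coeff0_mod m (a * ?B - b * ?A) = 0" for a b
    using bspec[OF L codeword_in_qc_code[OF m]] symp_codeword[OF m v] by simp
  have "xm1 m dvd ?B"
    by (rule xm1_dvd_if_coeff0_mod_mult_eq_0[OF m]) (use orth[of _ 0] in simp)
  moreover have "xm1 m dvd ?A"
    by (rule xm1_dvd_if_coeff0_mod_mult_eq_0[OF m])
      (use orth[of 0] in \<open>simp add: coeff0_mod_def\<close>)
  ultimately show "xm1 m dvd ?A \<and> xm1 m dvd ?B" by simp
next
  assume "xm1 m dvd ?A \<and> xm1 m dvd ?B"
  then have "coeff0_mod m (a * ?B - b * ?A) = 0" for a b by (simp add: coeff0_mod_eq_0)
  then show ?L using symp_codeword[OF m v] unfolding qc_code_def by auto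
qed

text \<open>The condition for \<open>(a g\<^sub>1\<^sub>1, a g\<^sub>1\<^sub>2 + b g\<^sub>2\<^sub>2)\<close> to lie in the symplectic dual
  (\<open>codeword_in_symp_dual_iff\<close>), with \<open>bar\<close> traded for the substitution \<open>x \<mapsto> x\<^sup>-\<^sup>1\<close>.\<close>

definition dual_cond :: "nat \<Rightarrow> 'a::field poly \<Rightarrow> 'a poly \<Rightarrow> 'a poly \<Rightarrow> 'a poly \<Rightarrow> 'a poly \<Rightarrow> bool" where
  "dual_cond m g11 g12 g22 a b \<longleftrightarrow> xm1 m dvd g22 * inv_subst m (a * g11) \<and>
      xm1 m dvd g11 * inv_subst m (a * g12 + b * g22) - g12 * inv_subst m (a * g11)"

lemma codeword_in_symp_dual_iff:
  fixes g11 g12 g22 :: "'a::field poly"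
  assumes m: "m \<ge> 1"
  shows "((a * g11) mod xm1 m, (a * g12 + b * g22) mod xm1 m) \<in> symp_dual m (qc_code m g11 g12 g22)
     \<longleftrightarrow> dual_cond m g11 g12 g22 a b"
proof -
  let ?v1 = "(a * g11) mod xm1 m" and ?v2 = "(a * g12 + b * g22) mod xm1 m"
  have e1: "xm1 m dvd bar m ?v1 - inv_subst m (a * g11)"
    and e2: "xm1 m dvd bar m ?v2 - inv_subst m (a * g12 + b * g22)"
    by (rule bar_mod_cong_inv_subst[OF m])+
  have "xm1 m dvd g22 * (bar m ?v1 - inv_subst m (a * g11))"
    using e1 by simp
  then have A: "xm1 m dvd g22 * bar m ?v1 \<longleftrightarrow> xm1 m dvd g22 * inv_subst m (a * g11)"
    by (intro dvd_iff_of_dvd_diff[OF dvd_refl]) (simp add: right_diff_distrib)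
  have "xm1 m dvd g11 * (bar m ?v2 - inv_subst m (a * g12 + b * g22))
      - g12 * (bar m ?v1 - inv_subst m (a * g11))"
    using e1 e2 by (simp add: dvd_diff)
  then have B: "xm1 m dvd g11 * bar m ?v2 - g12 * bar m ?v1 \<longleftrightarrow>
      xm1 m dvd g11 * inv_subst m (a * g12 + b * g22) - g12 * inv_subst m (a * g11)"
    by (intro dvd_iff_of_dvd_diff[OF dvd_refl]) (simp add: algebra_simps)
  have "(?v1, ?v2) \<in> symp_dual m (qc_code m g11 g12 g22) \<longleftrightarrow>
      (\<forall>c\<in>qc_code m g11 g12 g22. symp m c (?v1, ?v2) = 0)"
    unfolding symp_dual_def by (simp add: mod_xm1_in_Rm[OF m])
  also have "\<dots> \<longleftrightarrow> xm1 m dvd g22 * bar m ?v1 \<and> xm1 m dvd g11 * bar m ?v2 - g12 * bar m ?v1"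
    by (simp add: symp_orth_qc_code_iff[OF m] mod_xm1_in_Rm[OF m])
  also have "\<dots> \<longleftrightarrow> dual_cond m g11 g12 g22 a b"
    unfolding dual_cond_def using A B by simp
  finally show ?thesis .
qed

definition hull_trivial :: "nat \<Rightarrow> 'a::field poly \<Rightarrow> 'a poly \<Rightarrow> 'a poly \<Rightarrow> bool" where
  "hull_trivial m g11 g12 g22 \<longleftrightarrow> (\<forall>a b. dual_cond m g11 g12 g22 a b \<longrightarrow>
      xm1 m dvd a * g11 \<and> xm1 m dvd a * g12 + b * g22)"

lemma symp_LCD_qc_code_iff:
  fixes g11 g12 g22 :: "'a::field poly"
  assumes m: "m \<ge> 1"
  shows "symp_LCD m (qc_code m g11 g12 g22) \<longleftrightarrow> hull_trivial m g11 g12 g22"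
proof -
  let ?C = "qc_code m g11 g12 g22"
  have zero: "((a * g11) mod xm1 m, (a * g12 + b * g22) mod xm1 m) = (0, 0) \<longleftrightarrow>
     xm1 m dvd a * g11 \<and> xm1 m dvd a * g12 + b * g22" for a b
    by (simp add: mod_eq_0_iff_dvd)
  have "((0 * g11) mod xm1 m, (0 * g12 + 0 * g22) mod xm1 m) \<in> ?C \<inter> symp_dual m ?C"
    by (rule IntI[OF codeword_in_qc_code[OF m]])
      (subst codeword_in_symp_dual_iff[OF m], simp add: dual_cond_def)
  then have zero_in_hull: "(0, 0) \<in> ?C \<inter> symp_dual m ?C" by simp
  show ?thesis
  proof
    assume lcd: "symp_LCD m ?C"
    show "hull_trivial m g11 g12 g22" unfolding hull_trivial_def
    proof (intro allI impI)
      fix a b assume "dual_cond m g11 g12 g22 a b"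
      then have "((a * g11) mod xm1 m, (a * g12 + b * g22) mod xm1 m) \<in> ?C \<inter> symp_dual m ?C"
        using codeword_in_qc_code[OF m] codeword_in_symp_dual_iff[OF m] by blast
      then show "xm1 m dvd a * g11 \<and> xm1 m dvd a * g12 + b * g22"
        using lcd zero unfolding symp_LCD_def by blast
    qed
  next
    assume trivial: "hull_trivial m g11 g12 g22"
    have "?C \<inter> symp_dual m ?C \<subseteq> {(0, 0)}"
    proof
      fix v assume v: "v \<in> ?C \<inter> symp_dual m ?C"
      then obtain a b where c: "v = ((a * g11) mod xm1 m, (a * g12 + b * g22) mod xm1 m)"
        unfolding qc_code_def by blast
      then have "dual_cond m g11 g12 g22 a b" using v codeword_in_symp_dual_iff[OF m] by blast
      then show "v \<in> {(0, 0)}" using trivial zero c unfolding hull_trivial_def by blast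
    qed
    then show "symp_LCD m ?C" using zero_in_hull unfolding symp_LCD_def by blast
  qed
qed

subsection \<open>Squarefreeness of \<open>x\<^sup>m - 1\<close> and its divisors\<close>

lemma of_nat_card_eq_0: "of_nat (card (UNIV :: 'a set)) = (0 :: 'a::{ring_1,finite})"
proof -
  have "(\<Sum>x\<in>UNIV. x + 1) = (\<Sum>x\<in>(\<lambda>x. x + 1) ` UNIV. (x::'a))"
    by (subst sum.reindex) (auto intro: inj_onI)
  also have "(\<lambda>x. x + 1) ` UNIV = (UNIV :: 'a set)"
    by (auto intro!: image_eqI[of _ _ "_ - 1"])
  finally have "(\<Sum>x\<in>UNIV. (x::'a)) + of_nat (card (UNIV :: 'a set)) = (\<Sum>x\<in>UNIV. x)"
    by (simp add: sum.distrib)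
  then show ?thesis by simp
qed

lemma of_nat_neq_0_if_coprime_card:
  assumes "coprime (card (UNIV :: 'a set)) m"
  shows "of_nat m \<noteq> (0 :: 'a::{ring_1,finite})"
proof
  assume m0: "of_nat m = (0::'a)"
  have "gcd (int (card (UNIV :: 'a set))) (int m) = 1"
    using assms by (simp add: coprime_iff_gcd_eq_1 gcd_int_int_eq)
  then obtain u v where "u * int (card (UNIV :: 'a set)) + v * int m = 1"
    using bezout_int by metis
  then have "of_int (u * int (card (UNIV :: 'a set)) + v * int m) = (1::'a)" by simp
  then show False using m0 of_nat_card_eq_0[where 'a='a] by simp
qed

text \<open>A common prime factor of \<open>x\<^sup>m - 1\<close> and its derivative \<open>m x\<^sup>m\<^sup>-\<^sup>1\<close> would divide \<open>x\<^sup>m\<close>.\<close>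

lemma squarefree_xm1:
  assumes m: "m \<ge> 1" and char: "of_nat m \<noteq> (0::'a::field_gcd)"
  shows "squarefree (xm1 m :: 'a poly)"
proof (rule squarefreeI)
  fix p :: "'a poly" assume "p ^ 2 dvd xm1 m"
  then obtain k where k: "xm1 m = p * p * k" by (auto simp: power2_eq_square elim: dvdE)
  have "pderiv (xm1 m) = p * (2 * pderiv p * k + p * pderiv k)"
    by (subst k) (simp add: pderiv_mult algebra_simps)
  moreover have "pderiv (xm1 m :: 'a poly) = smult (of_nat m) (monom 1 (m - 1))"
    by (simp add: xm1_def pderiv_diff pderiv_monom smult_monom)
  ultimately have "p dvd monom 1 (m - 1)" using char dvd_smult_cancel by (metis dvd_triv_left)
  then have "p dvd monom 1 (m - 1) * monom 1 1" by simp
  then have "p dvd monom 1 m" using m by (simp add: mult_monom)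
  moreover have "p dvd xm1 m" using k by simp
  ultimately have "p dvd monom 1 m - xm1 m" by (rule dvd_diff)
  then show "p dvd 1" by (simp add: xm1_def)
qed

lemma squarefree_dvdI:
  fixes d h :: "'a::factorial_semiring"
  assumes sq: "squarefree d" and primes: "\<And>p. prime p \<Longrightarrow> p dvd d \<Longrightarrow> p dvd h"
  shows "d dvd h"
proof (cases "h = 0")
  case False
  have d0: "d \<noteq> 0" using sq by auto
  show ?thesis
  proof (rule multiplicity_le_imp_dvd[OF d0])
    fix p :: 'a assume p: "prime p"
    have "multiplicity p d \<le> 1" using sq d0 p squarefree_factorial_semiring'' by blast
    moreover have "multiplicity p h \<ge> 1" if "p dvd d"
      using primes[OF p that] False p
      by (simp add: Suc_le_eq multiplicity_gt_zero_iff prime_elem_multiplicity_eq_zero_iff)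
    ultimately show "multiplicity p d \<le> multiplicity p h"
      by (metis le_trans not_dvd_imp_multiplicity_0 le0)
  qed
qed simp

lemma squarefree_imp_prime_square_not_dvd:
  "squarefree n \<Longrightarrow> prime_elem p \<Longrightarrow> \<not> p * p dvd n"
  by (metis squarefreeD power2_eq_square prime_elem_not_unit)

lemma gcd_eq_1_iff_no_common_prime:
  fixes a b :: "'a::factorial_ring_gcd"
  assumes "a \<noteq> 0"
  shows "gcd a b = 1 \<longleftrightarrow> (\<forall>p. prime_elem p \<longrightarrow> p dvd a \<longrightarrow> \<not> p dvd b)"
proof
  assume "gcd a b = 1"
  then show "\<forall>p. prime_elem p \<longrightarrow> p dvd a \<longrightarrow> \<not> p dvd b"
    by (metis gcd_greatest is_unit_gcd_iff prime_elem_not_unit coprime_iff_gcd_eq_1)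
next
  assume no_common: "\<forall>p. prime_elem p \<longrightarrow> p dvd a \<longrightarrow> \<not> p dvd b"
  show "gcd a b = 1"
  proof (rule ccontr)
    assume "gcd a b \<noteq> 1"
    then have "\<not> is_unit (gcd a b)" by (metis is_unit_gcd_iff coprime_iff_gcd_eq_1)
    moreover have "gcd a b \<noteq> 0" using assms by simp
    ultimately obtain p where "p dvd gcd a b" "prime p" using prime_divisor_exists by blast
    then show False using no_common by auto
  qed
qed

lemma prime_elem_reflect_poly:
  fixes p :: "'a::field_gcd poly"
  assumes p: "prime_elem p" and c0: "coeff p 0 \<noteq> 0"
  shows "prime_elem (reflect_poly p)"
proof -
  have unit: "is_unit a" if "is_unit (reflect_poly a)" "coeff a 0 \<noteq> 0" for a :: "'a poly"
    using reflect_poly_dvd[OF that(1)] that(2) by simp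
  have ip: "irreducible p" using p by (simp add: prime_elem_iff_irreducible)
  have "irreducible (reflect_poly p)"
  proof (rule irreducibleI)
    show "reflect_poly p \<noteq> 0" using ip by auto
    show "\<not> is_unit (reflect_poly p)" using unit[OF _ c0] ip by (auto simp: irreducible_def)
    fix a b assume ab: "reflect_poly p = a * b"
    have "lead_coeff p = coeff a 0 * coeff b 0" using ab
      by (metis coeff_0_reflect_poly coeff_mult_0)
    then have a0: "coeff a 0 \<noteq> 0" and b0: "coeff b 0 \<noteq> 0" using ip by auto
    have "p = reflect_poly a * reflect_poly b" using ab c0
      by (metis reflect_poly_mult reflect_poly_reflect_poly)
    then have "is_unit (reflect_poly a) \<or> is_unit (reflect_poly b)" using ip
      by (simp add: irreducible_def)
    then show "is_unit a \<or> is_unit b" using unit a0 b0 by blast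
  qed
  then show ?thesis by (simp add: prime_elem_iff_irreducible)
qed

lemma mutual_dvd_imp_smult:
  fixes a b :: "'a::field poly"
  assumes "a \<noteq> 0" and "a dvd b" and "b dvd a"
  shows "\<exists>c. b = smult c a"
proof -
  obtain k k' where k: "b = a * k" and k': "a = b * k'" using assms(2,3) by (elim dvdE)
  then have "a * (k * k') = a * 1" by (simp add: mult.assoc[symmetric])
  then have "k * k' = 1" using assms(1) by simp
  then have "is_unit k" by (rule dvdI[OF sym])
  then obtain c where "k = [:c:]" using is_unit_poly_iff by blast
  then show ?thesis using k by auto
qed

lemma self_reciprocal_iff_prime_divisors:
  fixes h :: "'a::field_gcd poly"
  assumes m: "m \<ge> 1" and sq: "squarefree (xm1 m :: 'a poly)" and hX: "h dvd xm1 m"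
  shows "self_reciprocal h \<longleftrightarrow> (\<forall>p. prime_elem p \<longrightarrow> p dvd h \<longrightarrow> reflect_poly p dvd h)"
proof
  assume "self_reciprocal h"
  then obtain \<alpha> where h0: "h \<noteq> 0" and r: "reflect_poly h = smult \<alpha> h"
    unfolding self_reciprocal_def by blast
  have "\<alpha> \<noteq> 0" using r h0 by auto
  show "\<forall>p. prime_elem p \<longrightarrow> p dvd h \<longrightarrow> reflect_poly p dvd h"
  proof (intro allI impI)
    fix p assume "p dvd h"
    then have "reflect_poly p dvd smult \<alpha> h" using reflect_poly_dvd r by metis
    then show "reflect_poly p dvd h" using \<open>\<alpha> \<noteq> 0\<close> dvd_smult_cancel by blast
  qed
next
  assume closed: "\<forall>p. prime_elem p \<longrightarrow> p dvd h \<longrightarrow> reflect_poly p dvd h"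
  have h0: "h \<noteq> 0" using hX xm1_nonzero[OF m] by auto
  have rX: "reflect_poly h dvd xm1 m" by (rule reflect_poly_dvd_xm1[OF m hX])
  have "h dvd reflect_poly h"
  proof (rule squarefree_dvdI[OF squarefree_mono[OF hX sq]])
    fix p assume p: "prime p" "p dvd h"
    then have "reflect_poly p dvd h" using closed prime_imp_prime_elem by blast
    then show "p dvd reflect_poly h" using dvd_reflect_poly_iff[OF m dvd_trans[OF p(2) hX] hX] by blast
  qed
  moreover have "reflect_poly h dvd h"
  proof (rule squarefree_dvdI[OF squarefree_mono[OF rX sq]])
    fix s assume s: "prime s" "s dvd reflect_poly h"
    have sX: "s dvd xm1 m" using s(2) rX by (rule dvd_trans)
    have s0: "coeff s 0 \<noteq> 0" by (rule coeff_0_nonzero_if_dvd_xm1[OF m sX])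
    have "reflect_poly s dvd h" using s(2) dvd_reflect_poly_iff[OF m sX hX] by blast
    moreover have "prime_elem (reflect_poly s)"
      using prime_elem_reflect_poly[OF prime_imp_prime_elem[OF s(1)] s0] .
    ultimately have "reflect_poly (reflect_poly s) dvd h" using closed by blast
    then show "s dvd h" using s0 by simp
  qed
  ultimately obtain c where "reflect_poly h = smult c h"
    using mutual_dvd_imp_smult[OF h0] by blast
  then show "self_reciprocal h" unfolding self_reciprocal_def using h0 by blast
qed

lemma prime_elem_dvd_lcm_iff:
  fixes a b p :: "'a::factorial_semiring_gcd"
  assumes "prime_elem p"
  shows "p dvd lcm a b \<longleftrightarrow> p dvd a \<or> p dvd b"
proof
  assume "p dvd lcm a b"
  moreover have "lcm a b dvd a * b" by (simp add: lcm_least)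
  ultimately have "p dvd a * b" by (rule dvd_trans)
  then show "p dvd a \<or> p dvd b" using assms by (simp add: prime_elem_dvd_mult_iff)
qed (auto intro: dvd_trans)

subsection \<open>The prime-by-prime analysis\<close>

locale qc_setting =
  fixes m :: nat and g11 g12 g22 :: "'a::field_gcd poly"
  assumes m: "m \<ge> 1"
    and sqfree: "squarefree (xm1 m :: 'a poly)"
    and g11_dvd: "g11 dvd xm1 m" and g22_dvd: "g22 dvd xm1 m"
    and deg_g12: "g12 = 0 \<or> degree g12 < degree g22"
    and g11_g22_dvd: "g11 * g22 dvd xm1 m * g12"
begin

abbreviation "g \<equiv> gcd g11 g22"
abbreviation "l \<equiv> xm1 m div lcm g11 g22"
abbreviation "g11' \<equiv> g11 div g"
abbreviation "g22' \<equiv> g22 div g"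
abbreviation "D \<equiv> g11 * bar m g12 - g12 * bar m g11"
abbreviation "D' \<equiv> g11 * inv_subst m g12 - g12 * inv_subst m g11"

lemma xm1_eq: "xm1 m = l * lcm g11 g22"
  using g11_dvd g22_dvd by (simp add: lcm_least)

lemma g_dvd_xm1: "g dvd xm1 m"
  using gcd_dvd1 g11_dvd by (rule dvd_trans)

lemma g11'_dvd_g11: "g11' dvd g11" and g22'_dvd_g22: "g22' dvd g22"
  using dvd_triv_right[of g11' g] dvd_triv_right[of g22' g] by simp_all

lemma g11'_dvd_xm1: "g11' dvd xm1 m"
  using g11'_dvd_g11 g11_dvd by (rule dvd_trans)

lemma g22'_dvd_xm1: "g22' dvd xm1 m"
  using g22'_dvd_g22 g22_dvd by (rule dvd_trans)

lemma l_dvd_xm1: "l dvd xm1 m"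
  using dvd_triv_left[of l "lcm g11 g22"] by (simp only: xm1_eq[symmetric])

lemma prime_square_not_dvd:
  assumes "prime_elem p" and "h dvd xm1 m"
  shows "\<not> p * p dvd (h :: 'a poly)"
  using squarefree_imp_prime_square_not_dvd[OF squarefree_mono[OF assms(2) sqfree] assms(1)] .

lemma prime_dvd_g11'_iff:
  assumes p: "prime_elem p"
  shows "p dvd g11' \<longleftrightarrow> p dvd g11 \<and> \<not> p dvd g22"
proof
  assume h: "p dvd g11'"
  then have "p dvd g11" using g11'_dvd_g11 by (rule dvd_trans)
  moreover have "\<not> p dvd g22"
  proof
    assume "p dvd g22"
    then have "p dvd g" using \<open>p dvd g11\<close> by simp
    then have "p * p dvd g * g11'" using h by (rule mult_dvd_mono)
    then show False using prime_square_not_dvd[OF p g11_dvd] by simp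
  qed
  ultimately show "p dvd g11 \<and> \<not> p dvd g22" by simp
next
  assume "p dvd g11 \<and> \<not> p dvd g22"
  then have "p dvd g * g11'" and "\<not> p dvd g" by simp_all
  then show "p dvd g11'" using prime_elem_dvd_mult_iff[OF p] by blast
qed

lemma prime_dvd_g22'_iff:
  assumes p: "prime_elem p"
  shows "p dvd g22' \<longleftrightarrow> \<not> p dvd g11 \<and> p dvd g22"
proof
  assume h: "p dvd g22'"
  then have "p dvd g22" using g22'_dvd_g22 by (rule dvd_trans)
  moreover have "\<not> p dvd g11"
  proof
    assume "p dvd g11"
    then have "p dvd g" using \<open>p dvd g22\<close> by simp
    then have "p * p dvd g * g22'" using h by (rule mult_dvd_mono)
    then show False using prime_square_not_dvd[OF p g22_dvd] by simp
  qed
  ultimately show "\<not> p dvd g11 \<and> p dvd g22" by simp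
next
  assume "\<not> p dvd g11 \<and> p dvd g22"
  then have "p dvd g * g22'" and "\<not> p dvd g" by simp_all
  then show "p dvd g22'" using prime_elem_dvd_mult_iff[OF p] by blast
qed

lemma prime_dvd_l_iff:
  assumes p: "prime_elem p" and pX: "p dvd xm1 m"
  shows "p dvd l \<longleftrightarrow> \<not> p dvd g11 \<and> \<not> p dvd g22"
proof
  assume h: "p dvd l"
  have "\<not> p dvd lcm g11 g22"
  proof
    assume "p dvd lcm g11 g22"
    then have "p * p dvd l * lcm g11 g22" using h by (simp add: mult_dvd_mono)
    then show False using prime_square_not_dvd[OF p dvd_refl] by (simp only: xm1_eq[symmetric])
  qed
  then show "\<not> p dvd g11 \<and> \<not> p dvd g22" using prime_elem_dvd_lcm_iff[OF p] by simp
next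
  assume "\<not> p dvd g11 \<and> \<not> p dvd g22"
  then have "\<not> p dvd lcm g11 g22" using prime_elem_dvd_lcm_iff[OF p] by simp
  moreover have "p dvd l * lcm g11 g22" using pX by (simp only: xm1_eq[symmetric])
  ultimately show "p dvd l" using p by (simp add: prime_elem_dvd_mult_iff)
qed

lemma prime_dvd_g12:
  assumes p: "prime_elem p" and "p dvd g11" and "p dvd g22"
  shows "p dvd g12"
proof (rule ccontr)
  assume "\<not> p dvd g12"
  then have "coprime (p * p) g12" using prime_elem_imp_coprime[OF p] by simp
  moreover have "p * p dvd xm1 m * g12"
    using mult_dvd_mono[OF assms(2,3)] g11_g22_dvd by (rule dvd_trans)
  ultimately have "p * p dvd xm1 m" using coprime_dvd_mult_left_iff by blast
  then show False using prime_square_not_dvd[OF p dvd_refl] by blast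
qed

lemma reflect_prime_divisor:
  assumes "prime_elem p" and "p dvd xm1 m"
  shows "prime_elem (reflect_poly (p :: 'a poly))" and "reflect_poly p dvd xm1 m"
    and "reflect_poly (reflect_poly p) = p"
  using prime_elem_reflect_poly[OF assms(1) coeff_0_nonzero_if_dvd_xm1[OF m assms(2)]]
    reflect_poly_dvd_xm1[OF m assms(2)] coeff_0_nonzero_if_dvd_xm1[OF m assms(2)]
  by simp_all

lemma D_cong_D': "xm1 m dvd D - D'"
proof -
  have "degree g11 \<le> m" and "degree g22 \<le> m"
    using dvd_imp_degree_le[OF g11_dvd xm1_nonzero[OF m]] dvd_imp_degree_le[OF g22_dvd xm1_nonzero[OF m]]
      degree_xm1[OF m, where 'a='a] by simp_all
  moreover from this(2) have "degree g12 \<le> m" using deg_g12 by auto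
  ultimately have "xm1 m dvd g11 * (bar m g12 - inv_subst m g12) - g12 * (bar m g11 - inv_subst m g11)"
    by (intro dvd_diff dvd_mult bar_cong_inv_subst[OF m])
  then show ?thesis by (simp add: algebra_simps)
qed

lemma inv_subst_D'_cong: "xm1 m dvd inv_subst m D' + D'"
proof -
  have "xm1 m dvd inv_subst m g11 * (inv_subst m (inv_subst m g12) - g12)
      - inv_subst m g12 * (inv_subst m (inv_subst m g11) - g11)"
    by (intro dvd_diff dvd_mult inv_subst_inv_subst[OF m])
  then show ?thesis by (simp add: inv_subst_hom algebra_simps)
qed

lemma reflect_dvd_D'_iff:
  assumes "p dvd xm1 m"
  shows "reflect_poly p dvd D' \<longleftrightarrow> p dvd D'"
proof -
  have "reflect_poly p dvd D' \<longleftrightarrow> p dvd inv_subst m D'" using dvd_inv_subst_iff[OF m assms] by simp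
  also have "\<dots> \<longleftrightarrow> p dvd - D'"
    by (rule dvd_iff_of_dvd_diff[OF assms]) (use inv_subst_D'_cong in \<open>simp only: diff_minus_eq_add\<close>)
  finally show ?thesis by (simp only: dvd_minus_iff)
qed

lemma dvd_D_iff_dvd_D':
  assumes "p dvd xm1 m"
  shows "p dvd D \<longleftrightarrow> p dvd D'"
  using assms D_cong_D' by (rule dvd_iff_of_dvd_diff)

text \<open>Conditions (I)--(IV) of the theorem, localised at one irreducible factor \<open>p\<close>.\<close>

definition local_cond :: "'a poly \<Rightarrow> bool" where
  "local_cond p \<longleftrightarrow> (p dvd g \<longrightarrow> reflect_poly p dvd g) \<and> (p dvd l \<longrightarrow> reflect_poly p dvd l)
     \<and> \<not> (p dvd g11' \<and> reflect_poly p dvd g11')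
     \<and> \<not> (p dvd g22' \<and> reflect_poly p dvd g22' \<and> p dvd D)"

lemma conditions_iff_local_cond:
  "(self_reciprocal g \<and> self_reciprocal l \<and> gcd g11' (reflect_poly g11') = 1
      \<and> gcd (gcd g22' (reflect_poly g22')) D = 1)
   \<longleftrightarrow> (\<forall>p. prime_elem p \<longrightarrow> p dvd xm1 m \<longrightarrow> local_cond p)"
proof -
  have I: "self_reciprocal g \<longleftrightarrow>
      (\<forall>p. prime_elem p \<longrightarrow> p dvd xm1 m \<longrightarrow> p dvd g \<longrightarrow> reflect_poly p dvd g)"
    using self_reciprocal_iff_prime_divisors[OF m sqfree g_dvd_xm1] g_dvd_xm1 dvd_trans by blast
  have II: "self_reciprocal l \<longleftrightarrow>
      (\<forall>p. prime_elem p \<longrightarrow> p dvd xm1 m \<longrightarrow> p dvd l \<longrightarrow> reflect_poly p dvd l)"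
    using self_reciprocal_iff_prime_divisors[OF m sqfree l_dvd_xm1] l_dvd_xm1 dvd_trans by blast
  have "gcd g11' (reflect_poly g11') = 1 \<longleftrightarrow>
      (\<forall>p. prime_elem p \<longrightarrow> p dvd g11' \<longrightarrow> \<not> p dvd reflect_poly g11')"
    by (rule gcd_eq_1_iff_no_common_prime) (use g11'_dvd_xm1 xm1_nonzero[OF m] in auto)
  also have "\<dots> \<longleftrightarrow>
      (\<forall>p. prime_elem p \<longrightarrow> p dvd xm1 m \<longrightarrow> \<not> (p dvd g11' \<and> reflect_poly p dvd g11'))"
    using dvd_reflect_poly_iff[OF m _ g11'_dvd_xm1] g11'_dvd_xm1 dvd_trans by blast
  finally have III: "gcd g11' (reflect_poly g11') = 1 \<longleftrightarrow>
      (\<forall>p. prime_elem p \<longrightarrow> p dvd xm1 m \<longrightarrow> \<not> (p dvd g11' \<and> reflect_poly p dvd g11'))" .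
  have "gcd (gcd g22' (reflect_poly g22')) D = 1 \<longleftrightarrow>
      (\<forall>p. prime_elem p \<longrightarrow> p dvd gcd g22' (reflect_poly g22') \<longrightarrow> \<not> p dvd D)"
    by (rule gcd_eq_1_iff_no_common_prime) (use g22'_dvd_xm1 xm1_nonzero[OF m] in auto)
  also have "\<dots> \<longleftrightarrow> (\<forall>p. prime_elem p \<longrightarrow> p dvd xm1 m \<longrightarrow>
      \<not> (p dvd g22' \<and> reflect_poly p dvd g22' \<and> p dvd D))"
    using dvd_reflect_poly_iff[OF m _ g22'_dvd_xm1] g22'_dvd_xm1 dvd_trans by auto
  finally have IV: "gcd (gcd g22' (reflect_poly g22')) D = 1 \<longleftrightarrow> (\<forall>p. prime_elem p \<longrightarrow>
      p dvd xm1 m \<longrightarrow> \<not> (p dvd g22' \<and> reflect_poly p dvd g22' \<and> p dvd D))" .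
  show ?thesis unfolding I II III IV local_cond_def by blast
qed

lemma dual_cond_prime_dvd_a:
  assumes dc: "dual_cond m g11 g12 g22 a b" and p: "prime_elem p" "p dvd xm1 m"
    and lp: "local_cond p" and lq: "local_cond (reflect_poly p)"
    and p11: "\<not> p dvd g11" and p22: "p dvd g22"
  shows "p dvd a"
proof -
  let ?q = "reflect_poly p"
  note q = reflect_prime_divisor[OF p]
  have dc1: "?q dvd g22 * inv_subst m (a * g11)"
    and dc2: "?q dvd g11 * inv_subst m (a * g12 + b * g22) - g12 * inv_subst m (a * g11)"
    using dc q(2) unfolding dual_cond_def by (blast intro: dvd_trans)+
  show ?thesis
  proof (cases "?q dvd g22")
    case False
    then have "?q dvd inv_subst m (a * g11)" using dc1 q(1) by (simp add: prime_elem_dvd_mult_iff)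
    then have "p dvd a * g11" using reflect_dvd_inv_subst_iff[OF m p(2)] by simp
    then show ?thesis using p11 p(1) by (simp add: prime_elem_dvd_mult_iff)
  next
    case True
    have "\<not> ?q dvd g11"
    proof
      assume "?q dvd g11"
      then have "?q dvd g" using True by simp
      then have "p dvd g" using lq q(3) unfolding local_cond_def by auto
      then show False using p11 by simp
    qed
    then have "p dvd g22'" and "?q dvd g22'"
      using prime_dvd_g22'_iff[OF p(1)] prime_dvd_g22'_iff[OF q(1)] p11 p22 True by auto
    then have "\<not> p dvd D" using lp unfolding local_cond_def by blast
    then have "\<not> ?q dvd D'" using dvd_D_iff_dvd_D'[OF p(2)] reflect_dvd_D'_iff[OF p(2)] by simp
    have "?q dvd inv_subst m b * (g11 * inv_subst m g22)"
      using reflect_dvd_inv_subst_iff[OF m p(2)] p22 by simp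
    moreover have "g11 * inv_subst m (a * g12 + b * g22) - g12 * inv_subst m (a * g11)
        = inv_subst m a * D' + inv_subst m b * (g11 * inv_subst m g22)"
      by (simp add: inv_subst_hom algebra_simps)
    ultimately have "?q dvd inv_subst m a * D'" using dc2 by (simp add: dvd_add_left_iff)
    then have "?q dvd inv_subst m a" using \<open>\<not> ?q dvd D'\<close> q(1) by (simp add: prime_elem_dvd_mult_iff)
    then show ?thesis using reflect_dvd_inv_subst_iff[OF m p(2)] by simp
  qed
qed

lemma reflect_not_dvd_g11_if_not_dvd_g22:
  assumes p: "prime_elem p" "p dvd xm1 m"
    and lp: "local_cond p" and lq: "local_cond (reflect_poly p)" and p22: "\<not> p dvd g22"
  shows "\<not> reflect_poly p dvd g11"
proof
  let ?q = "reflect_poly p"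
  note q = reflect_prime_divisor[OF p]
  assume q11: "?q dvd g11"
  show False
  proof (cases "p dvd g11")
    case True
    then have "p dvd g11'" using prime_dvd_g11'_iff[OF p(1)] p22 by simp
    then have "\<not> ?q dvd g11'" using lp unfolding local_cond_def by blast
    then have "?q dvd g" using q11 prime_dvd_g11'_iff[OF q(1)] by simp
    then have "p dvd g" using lq q(3) unfolding local_cond_def by auto
    then show False using p22 by simp
  next
    case False
    then have "p dvd l" using prime_dvd_l_iff[OF p] p22 by simp
    then have "?q dvd l" using lp unfolding local_cond_def by blast
    then show False using prime_dvd_l_iff[OF q(1,2)] q11 by simp
  qed
qed

lemma prime_dvd_codeword_if_local_cond:
  assumes dc: "dual_cond m g11 g12 g22 a b" and p: "prime_elem p" "p dvd xm1 m"
    and lp: "local_cond p" and lq: "local_cond (reflect_poly p)"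
  shows "p dvd a * g11 \<and> p dvd a * g12 + b * g22"
proof -
  let ?q = "reflect_poly p"
  note q = reflect_prime_divisor[OF p]
  have dc1: "?q dvd g22 * inv_subst m (a * g11)"
    and dc2: "?q dvd g11 * inv_subst m (a * g12 + b * g22) - g12 * inv_subst m (a * g11)"
    using dc q(2) unfolding dual_cond_def by (blast intro: dvd_trans)+
  consider "p dvd g11" "p dvd g22" | "\<not> p dvd g22" | "\<not> p dvd g11" "p dvd g22" by blast
  then show ?thesis
  proof cases
    case 1
    then show ?thesis using prime_dvd_g12[OF p(1) 1] by simp
  next
    case 2
    have "p dvd a * g11"
    proof (cases "p dvd g11")
      case False
      then have "?q dvd l" using prime_dvd_l_iff[OF p] 2 lp unfolding local_cond_def by blast
      then have "\<not> ?q dvd g22" using prime_dvd_l_iff[OF q(1,2)] by simp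
      then have "?q dvd inv_subst m (a * g11)" using dc1 q(1) by (simp add: prime_elem_dvd_mult_iff)
      then show ?thesis using reflect_dvd_inv_subst_iff[OF m p(2)] by simp
    qed simp
    then have "?q dvd g12 * inv_subst m (a * g11)" using reflect_dvd_inv_subst_iff[OF m p(2)] by simp
    from dvd_add[OF dc2 this] have "?q dvd g11 * inv_subst m (a * g12 + b * g22)" by simp
    moreover have "\<not> ?q dvd g11" by (rule reflect_not_dvd_g11_if_not_dvd_g22[OF p lp lq 2])
    ultimately have "?q dvd inv_subst m (a * g12 + b * g22)" using q(1) by (simp add: prime_elem_dvd_mult_iff)
    then show ?thesis using \<open>p dvd a * g11\<close> reflect_dvd_inv_subst_iff[OF m p(2)] by simp
  next
    case 3
    then have "p dvd a" by (intro dual_cond_prime_dvd_a[OF dc p lp lq])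
    then show ?thesis using 3 by simp
  qed
qed

lemma hull_trivial_if_local_cond:
  assumes local: "\<forall>p. prime_elem p \<longrightarrow> p dvd xm1 m \<longrightarrow> local_cond p"
  shows "hull_trivial m g11 g12 g22"
  unfolding hull_trivial_def
proof (intro allI impI)
  fix a b assume dc: "dual_cond m g11 g12 g22 a b"
  have "p dvd a * g11 \<and> p dvd a * g12 + b * g22" if "prime p" "p dvd xm1 m" for p
    using prime_dvd_codeword_if_local_cond[OF dc _ that(2)] local reflect_prime_divisor that by simp
  then show "xm1 m dvd a * g11 \<and> xm1 m dvd a * g12 + b * g22"
    using squarefree_dvdI[OF sqfree] by blast
qed

lemma prime_not_dvd_xm1_div:
  fixes r :: "'a poly"
  assumes r: "prime_elem r" "r dvd xm1 m"
  shows "\<not> r dvd xm1 m div r"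
proof
  assume "r dvd xm1 m div r"
  then have "r * r dvd r * (xm1 m div r)" by simp
  then show False using prime_square_not_dvd[OF r(1) dvd_refl] r(2) by simp
qed

text \<open>The cofactor \<open>(x\<^sup>m - 1)/r\<close> supplies the witnesses for the hull: after the substitution
  \<open>x \<mapsto> x\<^sup>-\<^sup>1\<close> it is divisible by every prime factor of \<open>x\<^sup>m - 1\<close> except \<open>r\<^sup>*\<close>.\<close>

lemma xm1_dvd_inv_subst_cofactor_mult:
  fixes r Q :: "'a poly"
  assumes r: "prime_elem r" "r dvd xm1 m" and Q: "reflect_poly r dvd Q"
  shows "xm1 m dvd inv_subst m (xm1 m div r) * Q"
proof (rule squarefree_dvdI[OF sqfree])
  fix f :: "'a poly" assume f: "prime f" "f dvd xm1 m"
  show "f dvd inv_subst m (xm1 m div r) * Q"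
  proof (cases "reflect_poly f dvd xm1 m div r")
    case True
    then show ?thesis using dvd_inv_subst_iff[OF m f(2)] by simp
  next
    case False
    note rf = reflect_prime_divisor[OF prime_imp_prime_elem[OF f(1)] f(2)]
    have "reflect_poly f dvd r * (xm1 m div r)" using rf(2) r(2) by simp
    then have "reflect_poly f dvd r" using False rf(1) by (simp add: prime_elem_dvd_mult_iff)
    then have "f dvd reflect_poly r" using reflect_poly_dvd rf(3) by metis
    then show ?thesis using Q by (simp add: dvd_trans)
  qed
qed

lemma dvd_g22_if_reflect_dvd_g11:
  assumes trivial: "hull_trivial m g11 g12 g22" and r: "prime_elem r" "r dvd xm1 m"
    and r11: "reflect_poly r dvd g11"
  shows "r dvd g22"
proof -
  let ?E = "xm1 m div r"
  have "xm1 m dvd inv_subst m ?E * (g11 * inv_subst m g22)"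
    by (rule xm1_dvd_inv_subst_cofactor_mult[OF r]) (use r11 in simp)
  then have "dual_cond m g11 g12 g22 0 ?E"
    unfolding dual_cond_def by (simp add: inv_subst_hom algebra_simps)
  then have "xm1 m dvd ?E * g22" using trivial unfolding hull_trivial_def by fastforce
  then have "r dvd ?E * g22" using r(2) by (rule dvd_trans[rotated])
  then show ?thesis using prime_not_dvd_xm1_div[OF r] r(1) by (simp add: prime_elem_dvd_mult_iff)
qed

lemma dvd_g11_if_reflect_dvd_g22_D':
  assumes trivial: "hull_trivial m g11 g12 g22" and r: "prime_elem r" "r dvd xm1 m"
    and r22: "reflect_poly r dvd g22" and rD': "reflect_poly r dvd D'"
  shows "r dvd g11"
proof -
  let ?E = "xm1 m div r"
  have "xm1 m dvd inv_subst m ?E * (g22 * inv_subst m g11)"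
    by (rule xm1_dvd_inv_subst_cofactor_mult[OF r]) (use r22 in simp)
  moreover have "xm1 m dvd inv_subst m ?E * D'"
    by (rule xm1_dvd_inv_subst_cofactor_mult[OF r rD'])
  ultimately have "dual_cond m g11 g12 g22 ?E 0"
    unfolding dual_cond_def by (simp add: inv_subst_hom algebra_simps)
  then have "xm1 m dvd ?E * g11" using trivial unfolding hull_trivial_def by blast
  then have "r dvd ?E * g11" using r(2) by (rule dvd_trans[rotated])
  then show ?thesis using prime_not_dvd_xm1_div[OF r] r(1) by (simp add: prime_elem_dvd_mult_iff)
qed

lemma reflect_dvd_g11_if_reflect_dvd_g22:
  assumes trivial: "hull_trivial m g11 g12 g22" and r: "prime_elem r" "r dvd xm1 m"
    and r22: "reflect_poly r dvd g22" and r11: "\<not> r dvd g11" and "\<not> r dvd g22"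
  shows "reflect_poly r dvd g11"
proof -
  let ?E = "xm1 m div r"
  define a where "a = inv_subst m g11 * g22 * ?E"
  define b where "b = - (inv_subst m D' * ?E)"
  have "xm1 m dvd inv_subst m ?E * (g22 * (inv_subst m (inv_subst m g11) * inv_subst m g22 * inv_subst m g11))"
    by (rule xm1_dvd_inv_subst_cofactor_mult[OF r]) (use r22 in simp)
  moreover have "xm1 m dvd (inv_subst m (inv_subst m g11) - g11) * D' - g11 * (inv_subst m (inv_subst m D') - D')"
    by (intro dvd_diff dvd_mult dvd_mult2 inv_subst_inv_subst[OF m])
  then have "xm1 m dvd inv_subst m ?E * inv_subst m g22 *
      ((inv_subst m (inv_subst m g11) - g11) * D' - g11 * (inv_subst m (inv_subst m D') - D'))"
    by (rule dvd_mult)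
  ultimately have "dual_cond m g11 g12 g22 a b"
    unfolding dual_cond_def a_def b_def by (simp add: inv_subst_hom algebra_simps)
  then have "r dvd inv_subst m g11 * g22 * ?E * g11"
    using trivial r(2) unfolding hull_trivial_def a_def by (blast intro: dvd_trans)
  then have "r dvd inv_subst m g11"
    using prime_not_dvd_xm1_div[OF r] r(1) r11 \<open>\<not> r dvd g22\<close> by (simp add: prime_elem_dvd_mult_iff)
  then show ?thesis using dvd_inv_subst_iff[OF m r(2)] by simp
qed

lemma local_cond_if_hull_trivial:
  assumes trivial: "hull_trivial m g11 g12 g22" and p: "prime_elem p" "p dvd xm1 m"
  shows "local_cond p"
proof -
  let ?q = "reflect_poly p"
  note q = reflect_prime_divisor[OF p]
  note A = dvd_g22_if_reflect_dvd_g11[OF trivial] and B = dvd_g11_if_reflect_dvd_g22_D'[OF trivial]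
    and C = reflect_dvd_g11_if_reflect_dvd_g22[OF trivial]
  have "?q dvd g" if "p dvd g"
  proof (rule ccontr)
    assume "\<not> ?q dvd g"
    moreover have "p dvd D'" using that prime_dvd_g12[OF p(1)] by simp
    ultimately show False using A[OF q(1,2)] B[OF q(1,2)] q(3) that by auto
  qed
  moreover have "?q dvd l" if "p dvd l"
  proof (rule ccontr)
    assume "\<not> ?q dvd l"
    have "\<not> p dvd g11" "\<not> p dvd g22" using that prime_dvd_l_iff[OF p] by auto
    then show False
      using \<open>\<not> ?q dvd l\<close> prime_dvd_l_iff[OF q(1,2)] A[OF p] C[OF p] by blast
  qed
  moreover have "\<not> (p dvd g11' \<and> ?q dvd g11')"
    using prime_dvd_g11'_iff[OF p(1)] prime_dvd_g11'_iff[OF q(1)] A[OF p] by blast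
  moreover have "\<not> (p dvd g22' \<and> ?q dvd g22' \<and> p dvd D)"
    using prime_dvd_g22'_iff[OF p(1)] prime_dvd_g22'_iff[OF q(1)] B[OF p]
      dvd_D_iff_dvd_D'[OF p(2)] reflect_dvd_D'_iff[OF p(2)] by blast
  ultimately show ?thesis unfolding local_cond_def by blast
qed

lemma symp_LCD_iff_conditions:
  "symp_LCD m (qc_code m g11 g12 g22) \<longleftrightarrow>
     self_reciprocal g \<and> self_reciprocal l \<and> gcd g11' (reflect_poly g11') = 1
     \<and> gcd (gcd g22' (reflect_poly g22')) D = 1"
  unfolding symp_LCD_qc_code_iff[OF m] conditions_iff_local_cond
  using hull_trivial_if_local_cond local_cond_if_hull_trivial by blast

end

theorem theorem5p3:
  fixes m :: nat and g11 g12 g22 :: "'a::{field_gcd,finite} poly"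
  assumes m: "m \<ge> 1"
    and q: "coprime (card (UNIV :: 'a set)) m"
    and d11: "g11 dvd xm1 m"
    and d22: "g22 dvd xm1 m"
    and deg12: "g12 = 0 \<or> degree g12 < degree g22"
    and dprod: "g11 * g22 dvd xm1 m * g12"
  defines "g \<equiv> gcd g11 g22"
    and "l \<equiv> xm1 m div lcm g11 g22"
    and "g11' \<equiv> g11 div gcd g11 g22"
    and "g22' \<equiv> g22 div gcd g11 g22"
  shows "symp_LCD m (qc_code m g11 g12 g22) \<longleftrightarrow>
           self_reciprocal g
         \<and> self_reciprocal l
         \<and> gcd g11' (reflect_poly g11') = 1
         \<and> gcd (gcd g22' (reflect_poly g22')) (g11 * bar m g12 - g12 * bar m g11) = 1"
proof -
  have "squarefree (xm1 m :: 'a poly)"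
    using m of_nat_neq_0_if_coprime_card[OF q] by (rule squarefree_xm1)
  then interpret qc_setting m g11 g12 g22
    using m d11 d22 deg12 dprod by unfold_locales
  show ?thesis unfolding g_def l_def g11'_def g22'_def by (rule symp_LCD_iff_conditions)
qed

end
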